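(* For real $f\ge 0$ define $$I_2(f)=(1+f)\iint_{\pi/2>\alpha>\beta>0}\frac{\mathrm{d}\alpha\,\mathrm{d}\beta}{\sqrt{\bigl((1+f)^2-4f\cos^2\alpha\bigr)\bigl((1+f)^2-4f\sin^2\beta\bigr)}}.$$ Let $\theta=f\,\frac{\mathrm{d}}{\mathrm{d}f}$ and put $g(f)=I_2(f)/(1+f)$. Define $$R(f)=\frac1f\Bigl(\theta^3 g-2f\,(\theta^3+\theta)\bigl(f\,g\bigr)+f^2\,\theta^3\bigl(f^2 g\bigr)\Bigr),$$ that is, $R=L(f,\theta)I_2$ for the operator $L(f,\theta)=\frac1f\bigl(\theta^3-2f(\theta^3+\theta)f+f^2\theta^3f^2\bigr)\frac1{1+f}$, where powers of $f$ act as multiplication operators and the operators are composed from right to left. Then for $0<f<1$, $$R(f)=2\left(\frac{2f}{1+f^2}\right)^2-1.$$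
   Context: The paper does not specify an explicit domain for this identity; it is stated here on $0<f<1$, where $I_2$ is real-analytic. *)

theory Defs
  imports "HOL-Analysis.Analysis"
begin

definition I2 :: "real \<Rightarrow> real" where
  "I2 f = (1 + f) * integral {(a, b). 0 < b \<and> b < a \<and> a < pi / 2}
     (\<lambda>(a, b). 1 / sqrt (((1 + f)\<^sup>2 - 4 * f * (cos a)\<^sup>2) * ((1 + f)\<^sup>2 - 4 * f * (sin b)\<^sup>2)))"

definition theta :: "(real \<Rightarrow> real) \<Rightarrow> real \<Rightarrow> real" where
  "theta h = (\<lambda>x. x * deriv h x)"

definition gI :: "real \<Rightarrow> real" where
  "gI f = I2 f / (1 + f)"

definition R :: "real \<Rightarrow> real" where
  "R f = (1 / f) * ( theta (theta (theta gI)) f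
        - 2 * f * ( theta (theta (theta (\<lambda>x. x * gI x))) f + theta (\<lambda>x. x * gI x) f )
        + f\<^sup>2 * theta (theta (theta (\<lambda>x. x\<^sup>2 * gI x))) f )"

end

theory Submission
  imports Defs
begin

text \<open>
  Since \<open>(1+f)\<^sup>2 - 4f cos\<^sup>2\<alpha> = 1 - 2f cos 2\<alpha> + f\<^sup>2\<close> and
  \<open>(1+f)\<^sup>2 - 4f sin\<^sup>2\<beta> = 1 + 2f cos 2\<beta> + f\<^sup>2\<close>, the integrand of \<open>g = I\<^sub>2/(1+f)\<close> is
  \<open>y(cos 2\<alpha>) y(-cos 2\<beta>)\<close>, where \<open>y(c) = (1 - 2cf + f\<^sup>2)\<^sup>-\<^sup>1\<^sup>/\<^sup>2\<close> is the generating function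
  of the Legendre polynomials.  As a function of \<open>f\<close>, \<open>y\<close> satisfies a second order linear ODE up
  to a defect term, and for \<open>c = \<plusminus>cos 2t\<close> the defect is an exact \<open>t\<close>-derivative.  Written with
  \<open>d/df\<close> instead of \<open>\<theta>\<close>, \<open>L\<close> is the symmetric square of that ODE, so after differentiating
  under the integral sign only defect terms remain.  Integrating them out, first in \<open>\<beta>\<close> and then
  in \<open>\<alpha>\<close>, leaves the boundary values at \<open>\<alpha> = 0\<close> and \<open>\<alpha> = \<pi>/2\<close>, which give
  \<open>2 (2f/(1+f\<^sup>2))\<^sup>2 - 1\<close>.
\<close>

lemma theta_cube_eq:
  fixes \<phi> \<phi>' \<phi>'' \<phi>''' :: "real \<Rightarrow> real"
  assumes "open V" "f \<in> V"
    and "\<And>x. x \<in> V \<Longrightarrow> (\<phi> has_real_derivative \<phi>' x) (at x)"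
    and "\<And>x. x \<in> V \<Longrightarrow> (\<phi>' has_real_derivative \<phi>'' x) (at x)"
    and "\<And>x. x \<in> V \<Longrightarrow> (\<phi>'' has_real_derivative \<phi>''' x) (at x)"
  shows "theta \<phi> f = f * \<phi>' f"
    and "theta (theta (theta \<phi>)) f = f * \<phi>' f + 3 * f\<^sup>2 * \<phi>'' f + f ^ 3 * \<phi>''' f"
proof -
  have theta1: "theta \<phi> x = x * \<phi>' x" if "x \<in> V" for x
    unfolding theta_def using DERIV_imp_deriv[OF assms(3)[OF that]] by simp
  then show "theta \<phi> f = f * \<phi>' f"
    using assms(2) by simp
  have "(theta \<phi> has_real_derivative \<phi>' x + x * \<phi>'' x) (at x)" if "x \<in> V" for x
  proof (rule has_field_derivative_transform_within_open[OF _ assms(1) that])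
    show "((\<lambda>x. x * \<phi>' x) has_real_derivative \<phi>' x + x * \<phi>'' x) (at x)"
      using assms(4)[OF that] by (auto intro!: derivative_eq_intros)
  qed (simp add: theta1)
  from DERIV_imp_deriv[OF this]
  have theta2: "theta (theta \<phi>) x = x * (\<phi>' x + x * \<phi>'' x)" if "x \<in> V" for x
    unfolding theta_def[of "theta \<phi>"] using that by simp
  have "(theta (theta \<phi>) has_real_derivative \<phi>' x + 3 * x * \<phi>'' x + x\<^sup>2 * \<phi>''' x) (at x)"
    if "x \<in> V" for x
  proof (rule has_field_derivative_transform_within_open[OF _ assms(1) that])
    show "((\<lambda>x. x * (\<phi>' x + x * \<phi>'' x)) has_real_derivative \<phi>' x + 3 * x * \<phi>'' x + x\<^sup>2 * \<phi>''' x) (at x)"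
      using assms(4,5)[OF that]
      by (auto intro!: derivative_eq_intros simp: algebra_simps power2_eq_square)
  qed (simp add: theta2)
  from DERIV_imp_deriv[OF this[OF assms(2)]]
  show "theta (theta (theta \<phi>)) f = f * \<phi>' f + 3 * f\<^sup>2 * \<phi>'' f + f ^ 3 * \<phi>''' f"
    unfolding theta_def[of "theta (theta \<phi>)"] by (simp add: algebra_simps power2_eq_square power3_eq_cube)
qed

lemma integral_triangle_product:
  fixes h k :: "real \<Rightarrow> real"
  assumes h: "continuous_on UNIV h" and k: "continuous_on UNIV k"
  shows "integral {(a, b). 0 < b \<and> b < a \<and> a < T} (\<lambda>(a, b). h a * k b)
         = integral {0..T} (\<lambda>a. h a * integral {0..a} k)"
proof -
  define Tri where "Tri = {(a, b). 0 < b \<and> b < a \<and> a < T}"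
  let ?F = "\<lambda>z::real \<times> real. h (fst z) * k (snd z)"
  have "open Tri"
    unfolding Tri_def case_prod_beta by (intro open_Collect_conj open_Collect_less continuous_intros)
  then have Tri_borel: "Tri \<in> sets lborel"
    by simp
  have "set_integrable lborel (cbox (0, 0) (T, T)) ?F"
    unfolding set_integrable_def
    by (rule borel_integrable_compact) (auto intro!: continuous_intros continuous_on_compose2[OF h]
        continuous_on_compose2[OF k])
  then have F_integrable: "set_integrable lborel Tri ?F"
    by (rule set_integrable_subset[OF _ Tri_borel]) (auto simp: Tri_def cbox_Pair_iff)
  have k_integral: "(LINT b:{0<..<a}|lborel. k b) = integral {0..a} k" for a
  proof -
    have "set_integrable lborel {0<..<a} k"
      by (rule set_integrable_subset[OF borel_integrable_atLeastAtMost'[of 0 a k]])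
         (auto intro: continuous_on_subset[OF k])
    then show ?thesis
      by (simp add: set_borel_integral_eq_integral(2) integral_open_interval_real)
  qed
  have outer_integrable: "set_integrable lborel {0<..<T} (\<lambda>a. h a * integral {0..a} k)"
  proof -
    have "continuous_on {0..T} (\<lambda>a. h a * integral {0..a} k)"
      by (intro continuous_intros continuous_on_subset[OF h] indefinite_integral_continuous_1
          integrable_continuous_real continuous_on_subset[OF k]) auto
    then show ?thesis
      by (rule set_integrable_subset[OF borel_integrable_atLeastAtMost']) auto
  qed
  have "integral Tri ?F = (LINT z:Tri|lborel. ?F z)"
    using set_borel_integral_eq_integral(2)[OF F_integrable] by simp
  also have "\<dots> = (\<integral>a. (\<integral>b. indicator Tri (a, b) *\<^sub>R ?F (a, b) \<partial>lborel) \<partial>lborel)"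
    using F_integrable unfolding set_lebesgue_integral_def set_integrable_def lborel_prod[symmetric]
    by (rule lborel_pair.integral_fst'[symmetric])
  also have "\<dots> = (LINT a:{0<..<T}|lborel. h a * integral {0..a} k)"
    unfolding set_lebesgue_integral_def
  proof (rule Bochner_Integration.integral_cong[OF refl])
    fix a :: real
    have "(\<lambda>b. indicator Tri (a, b) *\<^sub>R ?F (a, b))
            = (\<lambda>b. indicator {0<..<T} a * (h a * (indicator {0<..<a} b *\<^sub>R k b)))"
      by (auto simp: Tri_def fun_eq_iff indicator_def)
    then show "(\<integral>b. indicator Tri (a, b) *\<^sub>R ?F (a, b) \<partial>lborel)
               = indicator {0<..<T} a *\<^sub>R (h a * integral {0..a} k)"
      using k_integral[of a] by (simp add: set_lebesgue_integral_def)
  qed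
  also have "\<dots> = integral {0..T} (\<lambda>a. h a * integral {0..a} k)"
    using outer_integrable by (simp add: set_borel_integral_eq_integral(2) integral_open_interval_real)
  finally show ?thesis
    by (simp add: Tri_def split_beta')
qed

lemma integral_rescale_to_unit_interval:
  fixes F :: "real \<Rightarrow> real"
  assumes "continuous_on {0..a} F" "0 \<le> a"
  shows "integral {0..1} (\<lambda>s. a * F (a * s)) = integral {0..a} F"
proof -
  have "((\<lambda>s. a *\<^sub>R F (a * s)) has_integral integral {a * 0..a * 1} F) {0..1}"
    by (rule has_integral_substitution[where c=0 and d=a])
       (use assms in \<open>auto intro!: derivative_eq_intros mult_left_le\<close>)
  then have "((\<lambda>s. a * F (a * s)) has_integral integral {0..a} F) {0..1}"
    by simp
  then show ?thesis
    by (rule integral_unique)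
qed

section \<open>The Legendre generating function\<close>

definition legendre_quad :: "real \<Rightarrow> real \<Rightarrow> real" where
  "legendre_quad c x = 1 + x\<^sup>2 - 2 * x * c"

definition lgf_pow :: "nat \<Rightarrow> real \<Rightarrow> real \<Rightarrow> real" where
  "lgf_pow n c x = 1 / sqrt (legendre_quad c x) ^ n"

abbreviation lgf :: "real \<Rightarrow> real \<Rightarrow> real" where
  "lgf \<equiv> lgf_pow 1"

lemma legendre_quad_pos:
  assumes "0 \<le> x" "x < 1" "c \<le> 1"
  shows "0 < legendre_quad c x"
proof -
  have "legendre_quad c x = (1 - x)\<^sup>2 + 2 * x * (1 - c)"
    by (simp add: legendre_quad_def power2_eq_square algebra_simps)
  moreover have "0 < (1 - x)\<^sup>2" "0 \<le> 2 * x * (1 - c)"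
    using assms by auto
  ultimately show ?thesis by linarith
qed

lemma lgf_pow_has_derivative:
  assumes pos: "0 < legendre_quad (c t) (x t)"
    and c: "(c has_real_derivative c') (at t within S)"
    and x: "(x has_real_derivative x') (at t within S)"
  shows "((\<lambda>t. lgf_pow n (c t) (x t)) has_real_derivative
           real n * (x t * c' - (x t - c t) * x') * lgf_pow (n + 2) (c t) (x t)) (at t within S)"
proof -
  have "0 < sqrt (legendre_quad (c t) (x t))"
    using pos by simp
  then show ?thesis
    unfolding lgf_pow_def legendre_quad_def using pos c x
    by (auto intro!: derivative_eq_intros simp: legendre_quad_def)
       (cases n; simp add: field_simps power2_eq_square)
qed

lemma lgf_pow_odd:
  assumes "0 < legendre_quad c x"
  shows "lgf_pow 3 c x = lgf c x / legendre_quad c x"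
    and "lgf_pow 5 c x = lgf c x / (legendre_quad c x)\<^sup>2"
    and "lgf_pow 7 c x = lgf c x / (legendre_quad c x) ^ 3"
proof -
  have "lgf_pow (2 * k + 1) c x = lgf c x / (legendre_quad c x) ^ k" for k
  proof -
    have "sqrt (legendre_quad c x) ^ (2 * k) = legendre_quad c x ^ k"
      using assms by (simp add: power_mult)
    then show ?thesis
      using assms by (simp add: lgf_pow_def field_simps)
  qed
  from this[of 1] this[of 2] this[of 3] show
    "lgf_pow 3 c x = lgf c x / legendre_quad c x"
    "lgf_pow 5 c x = lgf c x / (legendre_quad c x)\<^sup>2"
    "lgf_pow 7 c x = lgf c x / (legendre_quad c x) ^ 3"
    by (simp_all add: numeral_eq_Suc)
qed

lemma lgf_pow_at_1:
  assumes "x < 1"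
  shows "lgf_pow n 1 x = 1 / (1 - x) ^ n"
proof -
  have "legendre_quad 1 x = (1 - x)\<^sup>2"
    by (simp add: legendre_quad_def power2_eq_square algebra_simps)
  then show ?thesis
    using assms by (simp add: lgf_pow_def)
qed

lemma lgf_pow_at_minus_1:
  assumes "0 \<le> x"
  shows "lgf_pow n (- 1) x = 1 / (1 + x) ^ n"
proof -
  have "legendre_quad (- 1) x = (1 + x)\<^sup>2"
    by (simp add: legendre_quad_def power2_eq_square algebra_simps)
  then show ?thesis
    using assms by (simp add: lgf_pow_def)
qed

lemma lgf_pow_continuous_on [continuous_intros]:
  assumes "continuous_on S c" "continuous_on S x" "\<And>z. z \<in> S \<Longrightarrow> 0 < legendre_quad (c z) (x z)"
  shows "continuous_on S (\<lambda>z. lgf_pow n (c z) (x z))"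
proof -
  have "\<forall>z\<in>S. sqrt (legendre_quad (c z) (x z)) ^ n \<noteq> 0"
    using assms(3) by force
  then show ?thesis
    unfolding lgf_pow_def legendre_quad_def by (intro continuous_intros assms(1,2))
qed

(* Primes on lgf, lgf_prod, lgf_ode_defect and defect_antideriv denote derivatives in x. *)
definition lgf' :: "real \<Rightarrow> real \<Rightarrow> real" where
  "lgf' c x = - (x - c) * lgf_pow 3 c x"

definition lgf'' :: "real \<Rightarrow> real \<Rightarrow> real" where
  "lgf'' c x = - lgf_pow 3 c x + 3 * (x - c)\<^sup>2 * lgf_pow 5 c x"

definition lgf''' :: "real \<Rightarrow> real \<Rightarrow> real" where
  "lgf''' c x = 9 * (x - c) * lgf_pow 5 c x - 15 * (x - c) ^ 3 * lgf_pow 7 c x"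

lemma lgf_has_derivative [derivative_intros]:
  assumes "0 < legendre_quad c x"
  shows "((\<lambda>x. lgf c x) has_real_derivative lgf' c x) (at x within S)"
    and "((\<lambda>x. lgf' c x) has_real_derivative lgf'' c x) (at x within S)"
    and "((\<lambda>x. lgf'' c x) has_real_derivative lgf''' c x) (at x within S)"
proof -
  have pow: "((\<lambda>x. lgf_pow n c x) has_real_derivative real n * (c - x) * lgf_pow (n + 2) c x)
               (at x within S)" for n
    using lgf_pow_has_derivative[where c="\<lambda>_. c" and x="\<lambda>x. x" and t=x, OF _ DERIV_const DERIV_ident] assms by simp
  show "((\<lambda>x. lgf c x) has_real_derivative lgf' c x) (at x within S)"
    using pow[of 1] by (simp add: lgf'_def algebra_simps numeral_eq_Suc)
  show "((\<lambda>x. lgf' c x) has_real_derivative lgf'' c x) (at x within S)"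
    and "((\<lambda>x. lgf'' c x) has_real_derivative lgf''' c x) (at x within S)"
    unfolding lgf'_def lgf''_def lgf'''_def
    by (auto intro!: derivative_eq_intros pow simp: algebra_simps power2_eq_square power3_eq_cube)
qed

lemma lgf_derivs_continuous_on [continuous_intros]:
  assumes "continuous_on S c" "continuous_on S x" "\<And>z. z \<in> S \<Longrightarrow> 0 < legendre_quad (c z) (x z)"
  shows "continuous_on S (\<lambda>z. lgf' (c z) (x z))"
    and "continuous_on S (\<lambda>z. lgf'' (c z) (x z))"
    and "continuous_on S (\<lambda>z. lgf''' (c z) (x z))"
  unfolding lgf'_def lgf''_def lgf'''_def by (intro continuous_intros assms; simp add: assms)+

section \<open>The ODE in \<open>x\<close> and its defect\<close>

definition lgf_ode_defect :: "real \<Rightarrow> real \<Rightarrow> real" where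
  "lgf_ode_defect c x = c * lgf_pow 3 c x / x - 3 * (1 - c\<^sup>2) * lgf_pow 5 c x"

definition lgf_ode_defect' :: "real \<Rightarrow> real \<Rightarrow> real" where
  "lgf_ode_defect' c x = - c * lgf_pow 3 c x / x\<^sup>2 - 3 * c * (x - c) * lgf_pow 5 c x / x
     + 15 * (1 - c\<^sup>2) * (x - c) * lgf_pow 7 c x"

lemma lgf_ode:
  assumes "x \<noteq> 0" "x\<^sup>2 \<noteq> 1" "0 < legendre_quad c x"
  shows "lgf'' c x = (3 * x\<^sup>2 - 1) / (x * (1 - x\<^sup>2)) * lgf' c x + 1 / (1 - x\<^sup>2) * lgf c x
           + lgf_ode_defect c x"
proof -
  define D y m where "D = legendre_quad c x" and "y = lgf c x" and "m = 1 - x\<^sup>2"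
  have nonzero: "D \<noteq> 0" "m \<noteq> 0"
    using assms by (auto simp: D_def m_def)
  have c: "c = (1 + x\<^sup>2 - D) / (2 * x)"
    using assms(1) by (simp add: D_def legendre_quad_def field_simps)
  show ?thesis
    unfolding lgf'_def lgf''_def lgf_ode_defect_def lgf_pow_odd[OF assms(3)]
    unfolding D_def[symmetric] y_def[symmetric] m_def[symmetric]
    unfolding c
    using assms(1) nonzero by (simp add: field_simps) (simp add: m_def, algebra)
qed

lemma lgf_ode':
  assumes "x \<noteq> 0" "x\<^sup>2 \<noteq> 1" "0 < legendre_quad c x"
  shows "lgf''' c x = ((3 * x ^ 4 + 1) / (x\<^sup>2 * (1 - x\<^sup>2)\<^sup>2) + 1 / (1 - x\<^sup>2)) * lgf' c x
           + (3 * x\<^sup>2 - 1) / (x * (1 - x\<^sup>2)) * lgf'' c x + 2 * x / (1 - x\<^sup>2)\<^sup>2 * lgf c x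
           + lgf_ode_defect' c x"
proof -
  define D y m where "D = legendre_quad c x" and "y = lgf c x" and "m = 1 - x\<^sup>2"
  have nonzero: "D \<noteq> 0" "m \<noteq> 0"
    using assms by (auto simp: D_def m_def)
  have c: "c = (1 + x\<^sup>2 - D) / (2 * x)"
    using assms(1) by (simp add: D_def legendre_quad_def field_simps)
  show ?thesis
    unfolding lgf'_def lgf''_def lgf'''_def lgf_ode_defect'_def lgf_pow_odd[OF assms(3)]
    unfolding D_def[symmetric] y_def[symmetric] m_def[symmetric]
    unfolding c
    using assms(1) nonzero by (simp add: field_simps) (simp add: m_def, algebra)
qed

lemma lgf_ode_defect_continuous_on [continuous_intros]:
  assumes "continuous_on S c" "continuous_on S x" "\<And>z. z \<in> S \<Longrightarrow> 0 < legendre_quad (c z) (x z)"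
    and "\<And>z. z \<in> S \<Longrightarrow> x z \<noteq> 0"
  shows "continuous_on S (\<lambda>z. lgf_ode_defect (c z) (x z))"
    and "continuous_on S (\<lambda>z. lgf_ode_defect' (c z) (x z))"
  unfolding lgf_ode_defect_def lgf_ode_defect'_def by (intro continuous_intros assms; simp add: assms)+

definition defect_antideriv :: "real \<Rightarrow> real \<Rightarrow> real \<Rightarrow> real" where
  "defect_antideriv e x t = e * sin (2 * t) * lgf_pow 3 (e * cos (2 * t)) x / (2 * x)"

definition defect_antideriv' :: "real \<Rightarrow> real \<Rightarrow> real \<Rightarrow> real" where
  "defect_antideriv' e x t = e * sin (2 * t) *
     (- lgf_pow 3 (e * cos (2 * t)) x / (2 * x\<^sup>2)
      - 3 * (x - e * cos (2 * t)) * lgf_pow 5 (e * cos (2 * t)) x / (2 * x))"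

lemma defect_antideriv_has_derivative:
  assumes "e\<^sup>2 = 1" "0 < x" "x < 1"
  shows "(defect_antideriv e x has_real_derivative lgf_ode_defect (e * cos (2 * t)) x) (at t within S)"
    and "(defect_antideriv' e x has_real_derivative lgf_ode_defect' (e * cos (2 * t)) x) (at t within S)"
proof -
  have "e * cos (2 * t) \<le> 1"
    using assms(1) abs_cos_le_one[of "2 * t"] by (auto simp: power2_eq_1_iff)
  then have pos: "0 < legendre_quad (e * cos (2 * t)) x"
    using assms by (intro legendre_quad_pos) auto
  have sin_sq: "sin (t * 2) * sin (t * 2) = 1 - cos (t * 2) * cos (t * 2)"
    using sin_squared_eq[of "t * 2"] by (simp add: power2_eq_square)
  have e: "e * e = 1"
    using assms(1) by (simp add: power2_eq_square)
  show "(defect_antideriv e x has_real_derivative lgf_ode_defect (e * cos (2 * t)) x) (at t within S)"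
    unfolding defect_antideriv_def lgf_ode_defect_def using pos assms(2)
    by (auto intro!: derivative_eq_intros lgf_pow_has_derivative simp: field_simps) (use sin_sq e in algebra)
  show "(defect_antideriv' e x has_real_derivative lgf_ode_defect' (e * cos (2 * t)) x) (at t within S)"
    unfolding defect_antideriv'_def lgf_ode_defect'_def using pos assms(2)
    by (auto intro!: derivative_eq_intros lgf_pow_has_derivative simp: field_simps) (use sin_sq e in algebra)
qed

section \<open>The operator \<open>L\<close> as a symmetric square\<close>

definition L_op :: "real \<Rightarrow> real \<Rightarrow> real \<Rightarrow> real \<Rightarrow> real \<Rightarrow> real" where
  "L_op x u u' u'' u''' = 4 * x * (2 * x\<^sup>2 - 1) * u + (1 - 16 * x\<^sup>2 + 19 * x ^ 4) * u'
     + 3 * x * (1 - x\<^sup>2) * (1 - 3 * x\<^sup>2) * u'' + x\<^sup>2 * (1 - x\<^sup>2)\<^sup>2 * u'''"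

lemma theta_operator_eq_L_op:
  fixes g g' g'' g''' :: "real \<Rightarrow> real"
  assumes "open V" "f \<in> V" "f \<noteq> 0"
    and g': "\<And>x. x \<in> V \<Longrightarrow> (g has_real_derivative g' x) (at x)"
    and g'': "\<And>x. x \<in> V \<Longrightarrow> (g' has_real_derivative g'' x) (at x)"
    and g''': "\<And>x. x \<in> V \<Longrightarrow> (g'' has_real_derivative g''' x) (at x)"
  shows "(1 / f) * (theta (theta (theta g)) f
            - 2 * f * (theta (theta (theta (\<lambda>x. x * g x))) f + theta (\<lambda>x. x * g x) f)
            + f\<^sup>2 * theta (theta (theta (\<lambda>x. x\<^sup>2 * g x))) f)
         = L_op f (g f) (g' f) (g'' f) (g''' f)"
proof -
  note theta_g = theta_cube_eq[OF assms(1,2) g' g'' g''']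
  have "((\<lambda>x. x * g x) has_real_derivative g x + x * g' x) (at x)"
    and "((\<lambda>x. g x + x * g' x) has_real_derivative 2 * g' x + x * g'' x) (at x)"
    and "((\<lambda>x. 2 * g' x + x * g'' x) has_real_derivative 3 * g'' x + x * g''' x) (at x)"
    if "x \<in> V" for x
    using g'[OF that] g''[OF that] g'''[OF that] by (auto intro!: derivative_eq_intros)
  note theta_xg = theta_cube_eq[OF assms(1,2) this]
  have "((\<lambda>x. x\<^sup>2 * g x) has_real_derivative 2 * x * g x + x\<^sup>2 * g' x) (at x)"
    and "((\<lambda>x. 2 * x * g x + x\<^sup>2 * g' x) has_real_derivative 2 * g x + 4 * x * g' x + x\<^sup>2 * g'' x) (at x)"
    and "((\<lambda>x. 2 * g x + 4 * x * g' x + x\<^sup>2 * g'' x)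
           has_real_derivative 6 * g' x + 6 * x * g'' x + x\<^sup>2 * g''' x) (at x)"
    if "x \<in> V" for x
    using g'[OF that] g''[OF that] g'''[OF that]
    by (auto intro!: derivative_eq_intros simp: algebra_simps)
  note theta_x2g = theta_cube_eq(2)[OF assms(1,2) this]
  show ?thesis
    using assms(3) unfolding L_op_def
    by (simp only: theta_g(2) theta_xg theta_x2g) (simp add: field_simps power2_eq_square power3_eq_cube power4_eq_xxxx)
qed

lemma L_op_scale: "L_op x (k * u) (k * u') (k * u'') (k * u''') = k * L_op x u u' u'' u'''"
  by (simp add: L_op_def algebra_simps)

lemma L_op_integral:
  assumes "u integrable_on S" "u' integrable_on S" "u'' integrable_on S" "u''' integrable_on S"
  shows "L_op x (integral S u) (integral S u') (integral S u'') (integral S u''')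
         = integral S (\<lambda>t. L_op x (u t) (u' t) (u'' t) (u''' t))"
proof -
  have "((\<lambda>t. L_op x (u t) (u' t) (u'' t) (u''' t))
          has_integral L_op x (integral S u) (integral S u') (integral S u'') (integral S u''')) S"
    unfolding L_op_def using assms
    by (intro has_integral_add has_integral_mult_right integrable_integral)
  then show ?thesis
    by (simp add: integral_unique)
qed

definition defect_pairing :: "real \<Rightarrow> real \<Rightarrow> real \<Rightarrow> real \<Rightarrow> real \<Rightarrow> real" where
  "defect_pairing x r r' z z' =
     r * (2 * x * (1 - x\<^sup>2) * (1 - 3 * x\<^sup>2) * z + 3 * x\<^sup>2 * (1 - x\<^sup>2)\<^sup>2 * z') + r' * x\<^sup>2 * (1 - x\<^sup>2)\<^sup>2 * z"

lemma defect_pairing_has_derivative: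
  assumes "(r has_real_derivative dr) (at t within S)" "(r' has_real_derivative dr') (at t within S)"
    and "(z has_real_derivative dz) (at t within S)" "(z' has_real_derivative dz') (at t within S)"
  shows "((\<lambda>a. defect_pairing x (r a) (r' a) (z a) (z' a)) has_real_derivative
           defect_pairing x dr dr' (z t) (z' t) + defect_pairing x (r t) (r' t) dz dz') (at t within S)"
  unfolding defect_pairing_def using assms
  by (auto intro!: derivative_eq_intros simp: algebra_simps)

lemma defect_pairing_has_integral:
  assumes "(z has_integral Z) S" "(z' has_integral Z') S" "(t has_integral T) S" "(t' has_integral T') S"
  shows "((\<lambda>b. defect_pairing x r r' (z b) (z' b) + defect_pairing x (t b) (t' b) y y')
           has_integral defect_pairing x r r' Z Z' + defect_pairing x T T' y y') S"
  unfolding defect_pairing_def using assms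
  by (intro has_integral_add has_integral_mult_right has_integral_mult_left)

(* The hypotheses are lgf_ode and lgf_ode' with defects r, r' and t, t'.  Since L_op is the symmetric
   square of y'' - A y' - B y, it annihilates products of solutions and only the defects survive. *)
lemma L_op_product:
  fixes x y y' y'' y''' z z' z'' z''' r r' t t' :: real
  defines "A \<equiv> (3 * x\<^sup>2 - 1) / (x * (1 - x\<^sup>2))" and "B \<equiv> 1 / (1 - x\<^sup>2)"
    and "A' \<equiv> (3 * x ^ 4 + 1) / (x\<^sup>2 * (1 - x\<^sup>2)\<^sup>2)" and "B' \<equiv> 2 * x / (1 - x\<^sup>2)\<^sup>2"
  assumes "x \<noteq> 0" "x\<^sup>2 \<noteq> 1"
    and "y'' = A * y' + B * y + r" "y''' = (A' + B) * y' + A * y'' + B' * y + r'"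
    and "z'' = A * z' + B * z + t" "z''' = (A' + B) * z' + A * z'' + B' * z + t'"
  shows "L_op x (y * z) (y' * z + y * z') (y'' * z + 2 * y' * z' + y * z'')
           (y''' * z + 3 * y'' * z' + 3 * y' * z'' + y * z''')
         = defect_pairing x r r' z z' + defect_pairing x t t' y y'"
proof -
  define m where "m = 1 - x\<^sup>2"
  have "m \<noteq> 0"
    using assms(6) by (simp add: m_def)
  then show ?thesis
    unfolding L_op_def defect_pairing_def assms(8,10) unfolding assms(7,9)
    unfolding A_def B_def A'_def B'_def m_def[symmetric]
    using assms(5) by (simp add: field_simps) (simp add: m_def, algebra)
qed

definition lgf_prod :: "real \<Rightarrow> real \<Rightarrow> real \<Rightarrow> real" where
  "lgf_prod c d x = lgf c x * lgf d x"

definition lgf_prod' :: "real \<Rightarrow> real \<Rightarrow> real \<Rightarrow> real" where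
  "lgf_prod' c d x = lgf' c x * lgf d x + lgf c x * lgf' d x"

definition lgf_prod'' :: "real \<Rightarrow> real \<Rightarrow> real \<Rightarrow> real" where
  "lgf_prod'' c d x = lgf'' c x * lgf d x + 2 * lgf' c x * lgf' d x + lgf c x * lgf'' d x"

definition lgf_prod''' :: "real \<Rightarrow> real \<Rightarrow> real \<Rightarrow> real" where
  "lgf_prod''' c d x =
     lgf''' c x * lgf d x + 3 * lgf'' c x * lgf' d x + 3 * lgf' c x * lgf'' d x + lgf c x * lgf''' d x"

lemma lgf_prod_has_derivative:
  assumes "0 < legendre_quad c x" "0 < legendre_quad d x"
  shows "((\<lambda>x. lgf_prod c d x) has_real_derivative lgf_prod' c d x) (at x within S)"
    and "((\<lambda>x. lgf_prod' c d x) has_real_derivative lgf_prod'' c d x) (at x within S)"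
    and "((\<lambda>x. lgf_prod'' c d x) has_real_derivative lgf_prod''' c d x) (at x within S)"
  unfolding lgf_prod_def lgf_prod'_def lgf_prod''_def lgf_prod'''_def using assms
  by (auto intro!: derivative_eq_intros lgf_has_derivative simp del: One_nat_def simp: algebra_simps)

lemma lgf_prod_continuous_on:
  defines "S \<equiv> {..1} \<times> {..1} \<times> {0<..<1::real}"
  shows "continuous_on S (\<lambda>(c, d, x). lgf_prod c d x)"
    and "continuous_on S (\<lambda>(c, d, x). lgf_prod' c d x)"
    and "continuous_on S (\<lambda>(c, d, x). lgf_prod'' c d x)"
    and "continuous_on S (\<lambda>(c, d, x). lgf_prod''' c d x)"
proof -
  have pos: "0 < legendre_quad (fst z) (snd (snd z))" "0 < legendre_quad (fst (snd z)) (snd (snd z))"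
    if "z \<in> S" for z
    using that by (auto simp: S_def intro!: legendre_quad_pos)
  show "continuous_on S (\<lambda>(c, d, x). lgf_prod c d x)"
    and "continuous_on S (\<lambda>(c, d, x). lgf_prod' c d x)"
    and "continuous_on S (\<lambda>(c, d, x). lgf_prod'' c d x)"
    and "continuous_on S (\<lambda>(c, d, x). lgf_prod''' c d x)"
    unfolding lgf_prod_def lgf_prod'_def lgf_prod''_def lgf_prod'''_def split_beta
    by (intro continuous_intros pos; assumption)+
qed

definition lgf_defect_sum :: "real \<Rightarrow> real \<Rightarrow> real \<Rightarrow> real" where
  "lgf_defect_sum c d x =
     defect_pairing x (lgf_ode_defect c x) (lgf_ode_defect' c x) (lgf d x) (lgf' d x)
     + defect_pairing x (lgf_ode_defect d x) (lgf_ode_defect' d x) (lgf c x) (lgf' c x)"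

lemma lgf_defect_sum_continuous_on:
  "continuous_on ({..1} \<times> {..1} \<times> {0<..<1}) (\<lambda>(c, d, x). lgf_defect_sum c d x)"
proof -
  have "0 < legendre_quad (fst z) (snd (snd z))" "0 < legendre_quad (fst (snd z)) (snd (snd z))"
    "snd (snd z) \<noteq> 0"
    if "z \<in> {..1} \<times> {..1} \<times> {0<..<1::real}" for z
    using that by (auto intro!: legendre_quad_pos)
  then show ?thesis
    unfolding lgf_defect_sum_def defect_pairing_def split_beta
    by (intro continuous_intros) auto
qed

lemma L_op_lgf_prod:
  assumes "0 < x" "x < 1" "c \<le> 1" "d \<le> 1"
  shows "L_op x (lgf_prod c d x) (lgf_prod' c d x) (lgf_prod'' c d x) (lgf_prod''' c d x)
         = lgf_defect_sum c d x"
proof -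
  have x: "x \<noteq> 0" "x\<^sup>2 \<noteq> 1"
    using assms(1,2) by (auto simp: power2_eq_1_iff)
  have "0 < legendre_quad c x" "0 < legendre_quad d x"
    using assms by (auto intro: legendre_quad_pos)
  then show ?thesis
    unfolding lgf_prod_def lgf_prod'_def lgf_prod''_def lgf_prod'''_def lgf_defect_sum_def
    by (intro L_op_product x lgf_ode lgf_ode')
qed

section \<open>Differentiating under the integral sign\<close>

(* The substitution b = a s maps the triangle 0 < b < a < pi/2 onto a rectangle,
   where the Leibniz rule for parameter integrals applies. *)
definition rescaled_integral :: "(real \<Rightarrow> real \<Rightarrow> real \<Rightarrow> real) \<Rightarrow> real \<Rightarrow> real" where
  "rescaled_integral P x =
     integral (cbox (0, 0) (pi / 2, 1)) (\<lambda>(a, s). a * P (cos (2 * a)) (- cos (2 * (a * s))) x)"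

lemma rescaled_integrand_continuous_on:
  fixes P :: "real \<Rightarrow> real \<Rightarrow> real \<Rightarrow> real"
  assumes "continuous_on ({..1} \<times> {..1} \<times> {0<..<1}) (\<lambda>(c, d, x). P c d x)" "0 < x" "x < 1"
  shows "continuous_on (cbox (0, 0) (pi / 2, 1)) (\<lambda>(a, s). a * P (cos (2 * a)) (- cos (2 * (a * s))) x)"
proof -
  have "continuous_on (cbox (0, 0) (pi / 2, 1))
          (\<lambda>z. (\<lambda>(c, d, x). P c d x) (cos (2 * fst z), - cos (2 * (fst z * snd z)), x))"
    by (rule continuous_on_compose2[OF assms(1)]) (use assms(2,3) in \<open>auto intro!: continuous_intros\<close>)
  then show ?thesis
    by (auto simp: split_beta intro!: continuous_intros)
qed

lemma rescaled_integrand_joint_continuous_on: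
  fixes P :: "real \<Rightarrow> real \<Rightarrow> real \<Rightarrow> real"
  assumes "continuous_on ({..1} \<times> {..1} \<times> {0<..<1}) (\<lambda>(c, d, x). P c d x)"
  shows "continuous_on ({0<..<1} \<times> cbox (0, 0) (pi / 2, 1))
           (\<lambda>(x, a, s). a * P (cos (2 * a)) (- cos (2 * (a * s))) x)"
proof -
  have "continuous_on ({0<..<1} \<times> cbox (0, 0) (pi / 2, 1))
          (\<lambda>z. (\<lambda>(c, d, x). P c d x) (cos (2 * fst (snd z)), - cos (2 * (fst (snd z) * snd (snd z))), fst z))"
    by (rule continuous_on_compose2[OF assms]) (auto intro!: continuous_intros)
  then show ?thesis
    by (auto simp: split_beta intro!: continuous_intros)
qed

lemma rescaled_integral_has_derivative:
  fixes P P' :: "real \<Rightarrow> real \<Rightarrow> real \<Rightarrow> real"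
  assumes P': "\<And>c d x. c \<le> 1 \<Longrightarrow> d \<le> 1 \<Longrightarrow> 0 < x \<Longrightarrow> x < 1 \<Longrightarrow>
                 ((\<lambda>x. P c d x) has_real_derivative P' c d x) (at x)"
    and P_cont: "continuous_on ({..1} \<times> {..1} \<times> {0<..<1}) (\<lambda>(c, d, x). P c d x)"
    and P'_cont: "continuous_on ({..1} \<times> {..1} \<times> {0<..<1}) (\<lambda>(c, d, x). P' c d x)"
    and "0 < x" "x < 1"
  shows "(rescaled_integral P has_real_derivative rescaled_integral P' x) (at x)"
proof -
  have "(rescaled_integral P has_real_derivative rescaled_integral P' x) (at x within {0<..<1})"
    unfolding rescaled_integral_def[abs_def]
  proof (rule leibniz_rule_field_derivative[OF _ integrable_continuous
        rescaled_integrand_joint_continuous_on[OF P'_cont]])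
    fix y :: real and t :: "real \<times> real"
    assume "y \<in> {0<..<1}"
    moreover obtain a s where "t = (a, s)"
      by (cases t)
    moreover have "cos (2 * a) \<le> 1" "- cos (2 * (a * s)) \<le> 1"
      by simp_all
    ultimately show "((\<lambda>y. (\<lambda>(a, s). a * P (cos (2 * a)) (- cos (2 * (a * s))) y) t)
                 has_real_derivative (\<lambda>(a, s). a * P' (cos (2 * a)) (- cos (2 * (a * s))) y) t)
               (at y within {0<..<1})"
      by (simp add: DERIV_cmult has_field_derivative_at_within P')
  next
    fix y :: real
    assume "y \<in> {0<..<1}"
    then show "continuous_on (cbox (0, 0) (pi / 2, 1)) (\<lambda>(a, s). a * P (cos (2 * a)) (- cos (2 * (a * s))) y)"
      by (intro rescaled_integrand_continuous_on[OF P_cont]) auto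
  qed (use assms(4,5) in simp_all)
  then show ?thesis
    using assms(4,5) at_within_open[of x "{0<..<1}"] by simp
qed

lemma rescaled_integral_eq_iterated:
  fixes P :: "real \<Rightarrow> real \<Rightarrow> real \<Rightarrow> real"
  assumes P_cont: "continuous_on ({..1} \<times> {..1} \<times> {0<..<1}) (\<lambda>(c, d, x). P c d x)"
    and "0 < x" "x < 1"
  shows "rescaled_integral P x
         = integral {0..pi / 2} (\<lambda>a. integral {0..a} (\<lambda>b. P (cos (2 * a)) (- cos (2 * b)) x))"
proof -
  from integral_prod_continuous[OF rescaled_integrand_continuous_on[OF assms]]
  have "rescaled_integral P x = integral {0..pi / 2}
          (\<lambda>a. integral {0..1} (\<lambda>s. a * P (cos (2 * a)) (- cos (2 * (a * s))) x))"
    by (simp add: rescaled_integral_def)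
  also have "\<dots> = integral {0..pi / 2} (\<lambda>a. integral {0..a} (\<lambda>b. P (cos (2 * a)) (- cos (2 * b)) x))"
  proof (rule integral_cong)
    fix a :: real
    assume "a \<in> {0..pi / 2}"
    moreover have "continuous_on {0..a} (\<lambda>b. P (cos (2 * a)) (- cos (2 * b)) x)"
      by (rule continuous_on_compose2[OF P_cont, of _ "\<lambda>b. (cos (2 * a), - cos (2 * b), x)", simplified])
         (use assms(2,3) in \<open>auto intro!: continuous_intros\<close>)
    ultimately show "integral {0..1} (\<lambda>s. a * P (cos (2 * a)) (- cos (2 * (a * s))) x)
                     = integral {0..a} (\<lambda>b. P (cos (2 * a)) (- cos (2 * b)) x)"
      using integral_rescale_to_unit_interval[of a "\<lambda>b. P (cos (2 * a)) (- cos (2 * b)) x"] by simp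
  qed
  finally show ?thesis .
qed

lemma L_op_rescaled_integral:
  fixes P P' P'' P''' :: "real \<Rightarrow> real \<Rightarrow> real \<Rightarrow> real"
  assumes "continuous_on ({..1} \<times> {..1} \<times> {0<..<1}) (\<lambda>(c, d, x). P c d x)"
    and "continuous_on ({..1} \<times> {..1} \<times> {0<..<1}) (\<lambda>(c, d, x). P' c d x)"
    and "continuous_on ({..1} \<times> {..1} \<times> {0<..<1}) (\<lambda>(c, d, x). P'' c d x)"
    and "continuous_on ({..1} \<times> {..1} \<times> {0<..<1}) (\<lambda>(c, d, x). P''' c d x)"
    and "0 < x" "x < 1"
  shows "L_op x (rescaled_integral P x) (rescaled_integral P' x) (rescaled_integral P'' x)
           (rescaled_integral P''' x)
         = rescaled_integral (\<lambda>c d x. L_op x (P c d x) (P' c d x) (P'' c d x) (P''' c d x)) x"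
proof -
  note integrable = assms(1-4)[THEN rescaled_integrand_continuous_on, OF assms(5,6), THEN integrable_continuous]
  show ?thesis
    unfolding rescaled_integral_def L_op_integral[OF integrable]
    by (simp add: case_prod_unfold L_op_scale)
qed

lemma gI_eq_rescaled_integral:
  assumes "0 < x" "x < 1"
  shows "gI x = rescaled_integral lgf_prod x"
proof -
  have pos: "0 < legendre_quad c x" if "c \<le> 1" for c
    using assms that by (intro legendre_quad_pos) auto
  have "((1 + x)\<^sup>2 - 4 * x * (cos a)\<^sup>2) = legendre_quad (cos (2 * a)) x" for a
    unfolding legendre_quad_def cos_double_cos by (simp add: power2_eq_square algebra_simps)
  moreover have "((1 + x)\<^sup>2 - 4 * x * (sin b)\<^sup>2) = legendre_quad (- cos (2 * b)) x" for b
    unfolding legendre_quad_def cos_double_sin by (simp add: power2_eq_square algebra_simps)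
  ultimately have integrand: "(\<lambda>(a, b). 1 / sqrt (((1 + x)\<^sup>2 - 4 * x * (cos a)\<^sup>2) * ((1 + x)\<^sup>2 - 4 * x * (sin b)\<^sup>2)))
      = (\<lambda>(a, b). lgf (cos (2 * a)) x * lgf (- cos (2 * b)) x)"
    by (auto simp: lgf_pow_def real_sqrt_mult)
  have cont: "continuous_on UNIV (\<lambda>a. lgf (cos (2 * a)) x)" "continuous_on UNIV (\<lambda>b. lgf (- cos (2 * b)) x)"
    by (intro continuous_intros pos; simp)+
  have "gI x = integral {(a, b). 0 < b \<and> b < a \<and> a < pi / 2} (\<lambda>(a, b). lgf (cos (2 * a)) x * lgf (- cos (2 * b)) x)"
    unfolding gI_def I2_def integrand using assms(1) by simp
  also have "\<dots> = integral {0..pi / 2} (\<lambda>a. lgf (cos (2 * a)) x * integral {0..a} (\<lambda>b. lgf (- cos (2 * b)) x))"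
    by (rule integral_triangle_product[OF cont])
  also have "\<dots> = rescaled_integral lgf_prod x"
    using rescaled_integral_eq_iterated[OF lgf_prod_continuous_on(1) assms]
    by (simp add: lgf_prod_def[abs_def])
  finally show ?thesis .
qed

lemma rescaled_lgf_prod_has_derivative:
  assumes "0 < x" "x < 1"
  shows "(rescaled_integral lgf_prod has_real_derivative rescaled_integral lgf_prod' x) (at x)"
    and "(rescaled_integral lgf_prod' has_real_derivative rescaled_integral lgf_prod'' x) (at x)"
    and "(rescaled_integral lgf_prod'' has_real_derivative rescaled_integral lgf_prod''' x) (at x)"
proof -
  have pos: "0 < legendre_quad c y" if "c \<le> 1" "0 < y" "y < 1" for c y
    using that by (intro legendre_quad_pos) auto
  show "(rescaled_integral lgf_prod has_real_derivative rescaled_integral lgf_prod' x) (at x)"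
    by (rule rescaled_integral_has_derivative[OF lgf_prod_has_derivative(1)[OF pos pos]
          lgf_prod_continuous_on(1,2) assms])
  show "(rescaled_integral lgf_prod' has_real_derivative rescaled_integral lgf_prod'' x) (at x)"
    by (rule rescaled_integral_has_derivative[OF lgf_prod_has_derivative(2)[OF pos pos]
          lgf_prod_continuous_on(2,3) assms])
  show "(rescaled_integral lgf_prod'' has_real_derivative rescaled_integral lgf_prod''' x) (at x)"
    by (rule rescaled_integral_has_derivative[OF lgf_prod_has_derivative(3)[OF pos pos]
          lgf_prod_continuous_on(3,4) assms])
qed

lemma R_eq_L_op:
  assumes "0 < f" "f < 1"
  shows "R f = L_op f (rescaled_integral lgf_prod f) (rescaled_integral lgf_prod' f)
                 (rescaled_integral lgf_prod'' f) (rescaled_integral lgf_prod''' f)"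
proof -
  have "R f = L_op f (gI f) (rescaled_integral lgf_prod' f)
                (rescaled_integral lgf_prod'' f) (rescaled_integral lgf_prod''' f)"
    unfolding R_def
  proof (rule theta_operator_eq_L_op[where V="{0<..<1}"])
    fix x :: real
    assume x: "x \<in> {0<..<1}"
    show "(gI has_real_derivative rescaled_integral lgf_prod' x) (at x)"
      by (rule has_field_derivative_transform_within_open[OF rescaled_lgf_prod_has_derivative(1),
            where S="{0<..<1}"]) (use x in \<open>auto simp: gI_eq_rescaled_integral\<close>)
    show "(rescaled_integral lgf_prod' has_real_derivative rescaled_integral lgf_prod'' x) (at x)"
      and "(rescaled_integral lgf_prod'' has_real_derivative rescaled_integral lgf_prod''' x) (at x)"
      using x by (simp_all add: rescaled_lgf_prod_has_derivative)
  qed (use assms in simp_all)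
  then show ?thesis
    using assms by (simp add: gI_eq_rescaled_integral)
qed

section \<open>Integrating out the defects\<close>

definition inner_defect_integral :: "real \<Rightarrow> real \<Rightarrow> real" where
  "inner_defect_integral x a =
     defect_pairing x (lgf_ode_defect (cos (2 * a)) x) (lgf_ode_defect' (cos (2 * a)) x)
       (integral {0..a} (\<lambda>b. lgf (- cos (2 * b)) x)) (integral {0..a} (\<lambda>b. lgf' (- cos (2 * b)) x))
     + defect_pairing x (defect_antideriv (-1) x a) (defect_antideriv' (-1) x a)
         (lgf (cos (2 * a)) x) (lgf' (cos (2 * a)) x)"

lemma lgf_defect_sum_inner_integral:
  assumes "0 < x" "x < 1" "0 \<le> a"
  shows "integral {0..a} (\<lambda>b. lgf_defect_sum (cos (2 * a)) (- cos (2 * b)) x) = inner_defect_integral x a"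
proof -
  have pos: "0 < legendre_quad (- cos (2 * b)) x" for b
    using assms by (intro legendre_quad_pos) auto
  have "continuous_on {0..a} (\<lambda>b. lgf (- cos (2 * b)) x)" "continuous_on {0..a} (\<lambda>b. lgf' (- cos (2 * b)) x)"
    by (intro continuous_intros pos)+
  then have z: "((\<lambda>b. lgf (- cos (2 * b)) x) has_integral integral {0..a} (\<lambda>b. lgf (- cos (2 * b)) x)) {0..a}"
    and z': "((\<lambda>b. lgf' (- cos (2 * b)) x) has_integral integral {0..a} (\<lambda>b. lgf' (- cos (2 * b)) x)) {0..a}"
    by (simp_all add: integrable_continuous_real integrable_integral)
  have "((\<lambda>b. lgf_ode_defect (- cos (2 * b)) x)
          has_integral defect_antideriv (-1) x a - defect_antideriv (-1) x 0) {0..a}"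
    and "((\<lambda>b. lgf_ode_defect' (- cos (2 * b)) x)
          has_integral defect_antideriv' (-1) x a - defect_antideriv' (-1) x 0) {0..a}"
    using defect_antideriv_has_derivative[of "-1" x] assms
    by (auto intro!: fundamental_theorem_of_calculus simp: has_real_derivative_iff_has_vector_derivative[symmetric])
  then have t: "((\<lambda>b. lgf_ode_defect (- cos (2 * b)) x) has_integral defect_antideriv (-1) x a) {0..a}"
    and t': "((\<lambda>b. lgf_ode_defect' (- cos (2 * b)) x) has_integral defect_antideriv' (-1) x a) {0..a}"
    by (simp_all add: defect_antideriv_def defect_antideriv'_def)
  show ?thesis
    unfolding lgf_defect_sum_def inner_defect_integral_def
    by (rule integral_unique[OF defect_pairing_has_integral[OF z z' t t']])
qed

definition boundary_term :: "real \<Rightarrow> real \<Rightarrow> real" where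
  "boundary_term x c = (1 - x\<^sup>2) ^ 3 / 2 * c * lgf_pow 3 c x * lgf_pow 3 (- c) x
     - 4 * x\<^sup>2 * (1 - x\<^sup>2) / (1 + x\<^sup>2)\<^sup>2 * c * lgf c x * lgf (- c) x"

lemma boundary_term_has_derivative:
  assumes "0 < x" "x < 1"
  shows "((\<lambda>a. boundary_term x (cos (2 * a))) has_real_derivative
           defect_pairing x (defect_antideriv (-1) x a) (defect_antideriv' (-1) x a)
             (lgf (cos (2 * a)) x) (lgf' (cos (2 * a)) x)
           - defect_pairing x (defect_antideriv 1 x a) (defect_antideriv' 1 x a)
               (lgf (- cos (2 * a)) x) (lgf' (- cos (2 * a)) x)) (at a within S)"
proof -
  define c s where "c = cos (2 * a)" and "s = sin (2 * a)"
  define D E where "D = legendre_quad c x" and "E = legendre_quad (- c) x"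
  define y z where "y = lgf c x" and "z = lgf (- c) x"
  have pos: "0 < D" "0 < E"
    using assms by (auto simp: D_def E_def c_def intro!: legendre_quad_pos)
  have odd: "lgf_pow 3 c x = y / D" "lgf_pow 5 c x = y / D\<^sup>2"
    "lgf_pow 3 (- c) x = z / E" "lgf_pow 5 (- c) x = z / E\<^sup>2"
    using lgf_pow_odd[of c x] lgf_pow_odd[of "- c" x] pos by (simp_all add: D_def E_def y_def z_def)
  have DE: "D = 1 + x\<^sup>2 - 2 * x * c" "E = 1 + x\<^sup>2 + 2 * x * c"
    by (simp_all add: D_def E_def legendre_quad_def)
  have "1 + x\<^sup>2 \<noteq> 0"
    using zero_le_power2[of x] by linarith
  then show ?thesis
    unfolding boundary_term_def defect_pairing_def defect_antideriv_def defect_antideriv'_def lgf'_def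
    using pos assms
    by (auto intro!: derivative_eq_intros lgf_pow_has_derivative simp del: add_2_eq_Suc add_2_eq_Suc'
          simp: D_def[symmetric] E_def[symmetric] c_def[symmetric] s_def[symmetric])
       (simp only: odd One_nat_def[symmetric] y_def[symmetric] z_def[symmetric],
        simp add: field_simps, use DE in algebra)
qed

lemma boundary_term_boundary_values:
  assumes "0 < x" "x < 1"
  shows "boundary_term x (- 1) - boundary_term x 1 = 2 * (2 * x / (1 + x\<^sup>2))\<^sup>2 - 1"
proof -
  have "1 - x\<^sup>2 = (1 - x) * (1 + x)"
    by (simp add: power2_eq_square algebra_simps)
  then have pm1: "lgf_pow n 1 x * lgf_pow n (- 1) x = 1 / (1 - x\<^sup>2) ^ n" for n
    using assms by (simp add: lgf_pow_at_1 lgf_pow_at_minus_1 power_mult_distrib)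
  have "1 - x\<^sup>2 \<noteq> 0"
    using assms by (auto simp: power2_eq_1_iff)
  moreover have "1 + x\<^sup>2 \<noteq> 0"
    using zero_le_power2[of x] by linarith
  ultimately have nonzero: "1 - x\<^sup>2 \<noteq> 0" "1 + x\<^sup>2 \<noteq> 0" .
  have "boundary_term x 1 = (1 - x\<^sup>2) ^ 3 / 2 * (lgf_pow 3 1 x * lgf_pow 3 (- 1) x)
          - 4 * x\<^sup>2 * (1 - x\<^sup>2) / (1 + x\<^sup>2)\<^sup>2 * (lgf 1 x * lgf (- 1) x)"
    by (simp add: boundary_term_def mult.assoc)
  also have "\<dots> = 1 / 2 - 4 * x\<^sup>2 / (1 + x\<^sup>2)\<^sup>2"
    unfolding pm1 using nonzero by (simp add: field_simps)
  finally have "boundary_term x 1 = 1 / 2 - 4 * x\<^sup>2 / (1 + x\<^sup>2)\<^sup>2" .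
  moreover have "boundary_term x (- 1) = - boundary_term x 1"
    using nonzero by (simp add: boundary_term_def field_simps)
  ultimately show ?thesis
    by (simp add: power_divide power_mult_distrib)
qed

definition outer_primitive :: "real \<Rightarrow> real \<Rightarrow> real" where
  "outer_primitive x a =
     defect_pairing x (defect_antideriv 1 x a) (defect_antideriv' 1 x a)
       (integral {0..a} (\<lambda>b. lgf (- cos (2 * b)) x)) (integral {0..a} (\<lambda>b. lgf' (- cos (2 * b)) x))
     + boundary_term x (cos (2 * a))"

lemma outer_primitive_has_derivative:
  assumes "0 < x" "x < 1" "a \<in> {0..pi / 2}"
  shows "(outer_primitive x has_real_derivative inner_defect_integral x a) (at a within {0..pi / 2})"
proof -
  have pos: "0 < legendre_quad (- cos (2 * b)) x" for b
    using assms by (intro legendre_quad_pos) auto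
  have "continuous_on {0..pi / 2} (\<lambda>b. lgf (- cos (2 * b)) x)"
    and "continuous_on {0..pi / 2} (\<lambda>b. lgf' (- cos (2 * b)) x)"
    by (intro continuous_intros pos)+
  note primitives = this[THEN integral_has_real_derivative, OF assms(3)]
  have "(outer_primitive x has_real_derivative
           (defect_pairing x (lgf_ode_defect (cos (2 * a)) x) (lgf_ode_defect' (cos (2 * a)) x)
             (integral {0..a} (\<lambda>b. lgf (- cos (2 * b)) x)) (integral {0..a} (\<lambda>b. lgf' (- cos (2 * b)) x))
           + defect_pairing x (defect_antideriv 1 x a) (defect_antideriv' 1 x a)
               (lgf (- cos (2 * a)) x) (lgf' (- cos (2 * a)) x))
           + (defect_pairing x (defect_antideriv (-1) x a) (defect_antideriv' (-1) x a)
                (lgf (cos (2 * a)) x) (lgf' (cos (2 * a)) x)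
              - defect_pairing x (defect_antideriv 1 x a) (defect_antideriv' 1 x a)
                  (lgf (- cos (2 * a)) x) (lgf' (- cos (2 * a)) x))) (at a within {0..pi / 2})"
    unfolding outer_primitive_def[abs_def]
    using assms(1,2)
    by (intro DERIV_add defect_pairing_has_derivative defect_antideriv_has_derivative[where e=1, simplified]
        primitives boundary_term_has_derivative) simp_all
  then show ?thesis
    by (simp add: inner_defect_integral_def)
qed

lemma L_op_rescaled_lgf_prod:
  assumes "0 < x" "x < 1"
  shows "L_op x (rescaled_integral lgf_prod x) (rescaled_integral lgf_prod' x)
           (rescaled_integral lgf_prod'' x) (rescaled_integral lgf_prod''' x)
         = 2 * (2 * x / (1 + x\<^sup>2))\<^sup>2 - 1"
proof -
  have "L_op x (rescaled_integral lgf_prod x) (rescaled_integral lgf_prod' x)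
          (rescaled_integral lgf_prod'' x) (rescaled_integral lgf_prod''' x)
        = rescaled_integral (\<lambda>c d x. L_op x (lgf_prod c d x) (lgf_prod' c d x) (lgf_prod'' c d x)
            (lgf_prod''' c d x)) x"
    by (rule L_op_rescaled_integral[OF lgf_prod_continuous_on assms])
  also have "\<dots> = rescaled_integral lgf_defect_sum x"
    unfolding rescaled_integral_def using assms by (intro integral_cong) (auto simp: L_op_lgf_prod)
  also have "\<dots> = integral {0..pi / 2} (\<lambda>a. integral {0..a} (\<lambda>b. lgf_defect_sum (cos (2 * a)) (- cos (2 * b)) x))"
    by (rule rescaled_integral_eq_iterated[OF lgf_defect_sum_continuous_on assms])
  also have "\<dots> = integral {0..pi / 2} (inner_defect_integral x)"
    using assms by (intro integral_cong lgf_defect_sum_inner_integral) auto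
  also have "\<dots> = outer_primitive x (pi / 2) - outer_primitive x 0"
    using assms outer_primitive_has_derivative
    by (intro integral_unique fundamental_theorem_of_calculus)
       (auto simp: has_real_derivative_iff_has_vector_derivative[symmetric])
  also have "\<dots> = boundary_term x (- 1) - boundary_term x 1"
    by (simp add: outer_primitive_def defect_antideriv_def defect_antideriv'_def defect_pairing_def)
  finally show ?thesis
    using boundary_term_boundary_values[OF assms] by simp
qed

theorem theorem1:
  fixes f :: real
  assumes "0 < f" and "f < 1"
  shows "R f = 2 * (2 * f / (1 + f\<^sup>2))\<^sup>2 - 1"
  using R_eq_L_op[OF assms] L_op_rescaled_lgf_prod[OF assms] by simp

end
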